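(* Consider four agents in the plane with positions $p_1,p_2,p_3,p_4\in\mathbb{R}^2$, interaction graph with edge set $E=\{(1,2),(1,3),(2,3),(3,4)\}$, feasible desired distances, a potential satisfying the stated assumptions, and the dynamics $\dot p_i=-\sum_{j\in\mathcal{N}_i} g_{ij}(p_i-p_j)$. Let $p^*$ be an undesired equilibrium (i.e. $p^*\in\mathcal{Q}_I$) at which $p^*_1,p^*_2,p^*_3$ are collinear. Then, for a suitable labeling $\{i,j,k\}=\{1,2,3\}$, exactly one of the following configurations occurs, with the stated properties (all quantities evaluated at $p^*$): (a) the three agents are distinct and $p^*_j$ lies strictly between $p^*_i$ and $p^*_k$ on the line; then $g_{ij}<0$, $g_{jk}<0$, $g_{ik}>0$, $g_{ij}+g_{ik}<0$ and $g_{jk}+g_{ik}<0$; (b) $p^*_j=p^*_k\neq p^*_i$ (a pair of agents coincide and the remaining agent is at another position); then $g_{jk}<0$ and $g_{ij}=g_{ik}=0$; (c) $p^*_i=p^*_j=p^*_k$; then $g_{ij}<0$, $g_{jk}<0$, $g_{ik}<0$.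
   Context: Agents have single-integrator dynamics $\dot p_i=u_i$. For each edge $(i,j)$ a desired distance $\bar d_{ij}>0$ is given; the set of desired distances is feasible, meaning that whenever $(i,j),(j,k),(k,i)$ are edges, $\bar d_{ij}+\bar d_{jk}>\bar d_{ki}$, $\bar d_{jk}+\bar d_{ki}>\bar d_{ij}$, $\bar d_{ki}+\bar d_{ij}>\bar d_{jk}$ (here this applies to the triangle $1,2,3$). A potential $\phi(x,\bar d)$ is given such that for each fixed $\bar d>0$: $\phi(\cdot,\bar d)\ge 0$; $g(x,\bar d):=\partial\phi(x,\bar d)/\partial x$ is strictly monotonically increasing in $x$; $\phi$ and $g$ are continuously differentiable on $x\in(-\bar d^2,\infty)$ and each equals zero if and only if $x=0$; $\phi(\cdot,\bar d)$ is analytic in a neighbourhood of $0$. Write $z_{ij}=p_i-p_j$, $e_{ij}=\|z_{ij}\|^2-\bar d_{ij}^2$, $g_{ij}=g(e_{ij},\bar d_{ij})$ (symmetric in $i,j$), and $\mathcal{N}_i$ for the neighbours of $i$. The dynamics $\dot p_i=-\sum_{j\in\mathcal{N}_i}g_{ij}z_{ij}$ is the negative gradient of $V=\tfrac12\sum_{(i,j)\in E}\phi(e_{ij},\bar d_{ij})$. The equilibrium set is $\mathcal{Q}=\{p:\sum_{j\in\mathcal{N}_i}g_{ij}z_{ij}=0\ \forall i\}$; the desired set is $\mathcal{Q}_C=\{p\in\mathcal{Q}:\|z_{ij}\|=\bar d_{ij}\ \forall (i,j)\in E\}$; the undesired equilibrium set is $\mathcal{Q}_I=\mathcal{Q}\setminus\mathcal{Q}_C$.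 *)

theory Defs
  imports "HOL-Analysis.Analysis"
begin

definition real_analytic_at :: "(real \<Rightarrow> real) \<Rightarrow> real \<Rightarrow> bool" where
  "real_analytic_at f x0 \<longleftrightarrow>
     (\<exists>r>0. \<exists>a::nat \<Rightarrow> real. \<forall>x. \<bar>x - x0\<bar> < r \<longrightarrow> (\<lambda>n. a n * (x - x0) ^ n) sums f x)"

definition admissible_potential ::
  "(real \<Rightarrow> real \<Rightarrow> real) \<Rightarrow> (real \<Rightarrow> real \<Rightarrow> real) \<Rightarrow> bool" where
  "admissible_potential \<phi> g \<longleftrightarrow>
     (\<forall>d>0.
        (\<forall>x\<ge>-(d^2). \<phi> x d \<ge> 0)
      \<and> (\<forall>x>-(d^2). ((\<lambda>y. \<phi> y d) has_real_derivative g x d) (at x))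
      \<and> strict_mono_on {-(d^2)..} (\<lambda>x. g x d)
      \<and> (\<lambda>x. \<phi> x d) C1_differentiable_on {-(d^2)<..}
      \<and> (\<lambda>x. g x d) C1_differentiable_on {-(d^2)<..}
      \<and> (\<forall>x>-(d^2). \<phi> x d = 0 \<longleftrightarrow> x = 0)
      \<and> (\<forall>x>-(d^2). g x d = 0 \<longleftrightarrow> x = 0)
      \<and> (\<exists>r>0. \<forall>x. \<bar>x\<bar> < r \<longrightarrow> real_analytic_at (\<lambda>y. \<phi> y d) x))"

type_synonym config = "nat \<Rightarrow> real^2"

definition nbrs :: "(nat \<times> nat) set \<Rightarrow> nat \<Rightarrow> nat set" where
  "nbrs E i = {j. (i, j) \<in> E \<or> (j, i) \<in> E}"

definition err :: "config \<Rightarrow> (nat \<Rightarrow> nat \<Rightarrow> real) \<Rightarrow> nat \<Rightarrow> nat \<Rightarrow> real" where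
  "err p dbar i j = (norm (p i - p j))^2 - (dbar i j)^2"

definition gij :: "(real \<Rightarrow> real \<Rightarrow> real) \<Rightarrow> config \<Rightarrow> (nat \<Rightarrow> nat \<Rightarrow> real) \<Rightarrow> nat \<Rightarrow> nat \<Rightarrow> real" where
  "gij g p dbar i j = g (err p dbar i j) (dbar i j)"

definition equilibrium ::
  "(real \<Rightarrow> real \<Rightarrow> real) \<Rightarrow> (nat \<times> nat) set \<Rightarrow> (nat \<Rightarrow> nat \<Rightarrow> real) \<Rightarrow> config \<Rightarrow> bool" where
  "equilibrium g E dbar p \<longleftrightarrow>
     (\<forall>i. (\<Sum>j\<in>nbrs E i. gij g p dbar i j *\<^sub>R (p i - p j)) = 0)"

definition desired_eq ::
  "(real \<Rightarrow> real \<Rightarrow> real) \<Rightarrow> (nat \<times> nat) set \<Rightarrow> (nat \<Rightarrow> nat \<Rightarrow> real) \<Rightarrow> config \<Rightarrow> bool" where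
  "desired_eq g E dbar p \<longleftrightarrow>
     equilibrium g E dbar p \<and> (\<forall>(i, j)\<in>E. norm (p i - p j) = dbar i j)"

definition undesired_eq ::
  "(real \<Rightarrow> real \<Rightarrow> real) \<Rightarrow> (nat \<times> nat) set \<Rightarrow> (nat \<Rightarrow> nat \<Rightarrow> real) \<Rightarrow> config \<Rightarrow> bool" where
  "undesired_eq g E dbar p \<longleftrightarrow> equilibrium g E dbar p \<and> \<not> desired_eq g E dbar p"

definition E4 :: "(nat \<times> nat) set" where
  "E4 = {(1,2), (1,3), (2,3), (3,4)}"

end

theory Submission
  imports Defs
begin

text \<open>
  Only the force balances of agents 1, 2, 3 matter: agent 4 sees only agent 3, so its balance
  kills the term of edge (3,4) in the balance of agent 3. If agent j lies on the segment between
  agents i and k, say p_j = (1 - u) p_i + u p_k, the two balances become the scalar equations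
  g_ik = -u g_ij and (1 - u) g_jk = u g_ij. For 0 < u < 1 the long edge must be stretched
  (g_ik > 0): otherwise g_ij, g_jk \<ge> 0, so both short edges are at least their desired length
  while their sum, the long edge, is at most its desired length, contradicting the strict triangle
  inequality. The signs of g_ij, g_jk and of the two sums then follow from the scalar equations.
  For u \<in> {0, 1} two agents coincide, their edge is compressed and the other two forces vanish;
  if all three coincide every edge is compressed.
\<close>

definition collinear_equilibrium_shape ::
  "('a \<Rightarrow> 'a \<Rightarrow> real) \<Rightarrow> ('a \<Rightarrow> 'v::real_normed_vector) \<Rightarrow> 'a \<Rightarrow> 'a \<Rightarrow> 'a \<Rightarrow> bool" where
  "collinear_equilibrium_shape G p i j k \<longleftrightarrow>
     (p i \<noteq> p j \<and> p j \<noteq> p k \<and> p i \<noteq> p k \<and> p j \<in> open_segment (p i) (p k) \<and>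
         G i j < 0 \<and> G j k < 0 \<and> G i k > 0 \<and> G i j + G i k < 0 \<and> G j k + G i k < 0)
   \<or> (p j = p k \<and> p j \<noteq> p i \<and> G j k < 0 \<and> G i j = 0 \<and> G i k = 0)
   \<or> (p i = p j \<and> p j = p k \<and> G i j < 0 \<and> G j k < 0 \<and> G i k < 0)"

lemma segment_force_balance:
  fixes P Q R :: "'v::real_vector"
  assumes Q: "Q = (1 - u) *\<^sub>R P + u *\<^sub>R R" and PR: "P \<noteq> R"
    and balance_P: "gPQ *\<^sub>R (P - Q) + gPR *\<^sub>R (P - R) = 0"
    and balance_Q: "gPQ *\<^sub>R (Q - P) + gQR *\<^sub>R (Q - R) = 0"
  shows "gPR = - (u * gPQ)" "gQR * (1 - u) = u * gPQ"
proof -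
  have "(gPQ * u + gPR) *\<^sub>R (P - R) = 0"
    using balance_P unfolding Q by (simp add: algebra_simps)
  then have "gPQ * u + gPR = 0"
    using PR by simp
  then show "gPR = - (u * gPQ)"
    by (simp add: algebra_simps)
  have "(gQR * (1 - u) - gPQ * u) *\<^sub>R (P - R) = 0"
    using balance_Q unfolding Q by (simp add: algebra_simps)
  then have "gQR * (1 - u) - gPQ * u = 0"
    using PR by simp
  then show "gQR * (1 - u) = u * gPQ"
    by (simp add: algebra_simps)
qed

locale triangle_equilibrium =
  fixes G d :: "'a \<Rightarrow> 'a \<Rightarrow> real" and p :: "'a \<Rightarrow> 'v::euclidean_space" and a b c :: 'a
  assumes distinct_labels: "distinct [a, b, c]"
    and G_sym: "\<And>x y. G x y = G y x"
    and G_less_0_iff: "\<And>x y. x \<in> {a, b, c} \<Longrightarrow> y \<in> {a, b, c} \<Longrightarrow> x \<noteq> y \<Longrightarrow>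
                                G x y < 0 \<longleftrightarrow> norm (p x - p y) < d x y"
    and G_greater_0_iff: "\<And>x y. x \<in> {a, b, c} \<Longrightarrow> y \<in> {a, b, c} \<Longrightarrow> x \<noteq> y \<Longrightarrow>
                                G x y > 0 \<longleftrightarrow> norm (p x - p y) > d x y"
    and d_pos: "\<And>x y. x \<in> {a, b, c} \<Longrightarrow> y \<in> {a, b, c} \<Longrightarrow> x \<noteq> y \<Longrightarrow> d x y > 0"
    and triangle_strict: "\<And>x y z. {x, y, z} = {a, b, c} \<Longrightarrow> distinct [x, y, z] \<Longrightarrow>
                                d x z < d x y + d y z"
    and balance: "\<And>x. x \<in> {a, b, c} \<Longrightarrow>
                                (\<Sum>y\<in>{a, b, c} - {x}. G x y *\<^sub>R (p x - p y)) = 0"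
begin

lemma balance_pair:
  assumes "{x, y, z} = {a, b, c}" "distinct [x, y, z]"
  shows "G x y *\<^sub>R (p x - p y) + G x z *\<^sub>R (p x - p z) = 0"
proof -
  have "x \<in> {a, b, c}" "{a, b, c} - {x} = {y, z}"
    using assms by auto
  then have "(\<Sum>w\<in>{y, z}. G x w *\<^sub>R (p x - p w)) = 0"
    using balance by metis
  then show ?thesis
    using assms(2) by simp
qed

lemma interior_shape:
  assumes labels: "{x, y, z} = {a, b, c}" "distinct [x, y, z]"
    and u: "0 < u" "u < 1" and y: "p y = (1 - u) *\<^sub>R p x + u *\<^sub>R p z" and xz: "p x \<noteq> p z"
    and Gxz: "G x z = - (u * G x y)" and Gyz: "G y z * (1 - u) = u * G x y"
  shows "collinear_equilibrium_shape G p x y z"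
proof -
  have in_T: "x \<in> {a, b, c}" "y \<in> {a, b, c}" "z \<in> {a, b, c}" and ne: "x \<noteq> y" "y \<noteq> z" "x \<noteq> z"
    using labels by auto
  have "p x - p y = u *\<^sub>R (p x - p z)" "p y - p z = (1 - u) *\<^sub>R (p x - p z)"
    unfolding y by (simp_all add: algebra_simps)
  then have norm_xy: "norm (p x - p y) = u * norm (p x - p z)"
    and norm_yz: "norm (p y - p z) = (1 - u) * norm (p x - p z)"
    using u by simp_all
  have Gxz_pos: "G x z > 0"
  proof (rule ccontr)
    assume "\<not> G x z > 0"
    then have "G x y \<ge> 0"
      using Gxz u by (auto simp: mult_less_0_iff)
    then have "G y z * (1 - u) \<ge> 0"
      using Gyz u by simp
    then have "G y z \<ge> 0"
      using u by (simp add: zero_le_mult_iff)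
    have "d x y \<le> norm (p x - p y)"
      using G_less_0_iff[OF in_T(1,2) ne(1)] \<open>G x y \<ge> 0\<close> by linarith
    moreover have "d y z \<le> norm (p y - p z)"
      using G_less_0_iff[OF in_T(2,3) ne(2)] \<open>G y z \<ge> 0\<close> by linarith
    moreover have "norm (p x - p z) \<le> d x z"
      using G_greater_0_iff[OF in_T(1,3) ne(3)] \<open>\<not> G x z > 0\<close> by linarith
    ultimately show False
      using triangle_strict[OF labels] norm_xy norm_yz by (simp add: algebra_simps)
  qed
  have "u * G x y < 0"
    using Gxz Gxz_pos by linarith
  then have Gxy_neg: "G x y < 0"
    using u by (auto simp: mult_less_0_iff)
  have "G y z * (1 - u) < 0"
    using Gyz \<open>u * G x y < 0\<close> by simp
  then have Gyz_neg: "G y z < 0"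
    using u by (auto simp: mult_less_0_iff)
  have "G x y * (1 - u) < 0" "G y z * u < 0"
    using Gxy_neg Gyz_neg u by (simp_all add: mult_neg_pos)
  then have "G x y + G x z < 0" "G y z + G x z < 0"
    using Gxz Gyz by (simp_all add: algebra_simps)
  moreover have "norm (p x - p y) > 0" "norm (p y - p z) > 0"
    using norm_xy norm_yz u xz by simp_all
  then have "p x \<noteq> p y" "p y \<noteq> p z"
    by auto
  moreover have "p y \<in> open_segment (p x) (p z)"
    unfolding in_segment using xz u y by blast
  ultimately show ?thesis
    unfolding collinear_equilibrium_shape_def using Gxy_neg Gyz_neg Gxz_pos xz by (intro disjI1) simp
qed

lemma segment_shape:
  assumes labels: "{x, y, z} = {a, b, c}" "distinct [x, y, z]"
    and y_between: "p y \<in> closed_segment (p x) (p z)"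
  shows "\<exists>i j k. {i, j, k} = {a, b, c} \<and> collinear_equilibrium_shape G p i j k"
proof -
  have in_T: "x \<in> {a, b, c}" "y \<in> {a, b, c}" "z \<in> {a, b, c}"
    and ne: "x \<noteq> y" "y \<noteq> z" "x \<noteq> z"
    using labels by auto
  have compressed: "G v w < 0" if "v \<in> {a, b, c}" "w \<in> {a, b, c}" "v \<noteq> w" "p v = p w" for v w
    using G_less_0_iff[OF that(1-3)] d_pos[OF that(1-3)] that(4) by simp
  obtain u where u: "0 \<le> u" "u \<le> 1" and y: "p y = (1 - u) *\<^sub>R p x + u *\<^sub>R p z"
    using y_between by (auto simp: in_segment)
  show ?thesis
  proof (cases "p x = p z")
    case True
    then have "p x = p y" "p y = p z"
      using y by (simp_all add: algebra_simps)
    moreover have "G x y < 0" "G y z < 0" "G x z < 0"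
      using compressed in_T ne calculation by simp_all
    ultimately have "collinear_equilibrium_shape G p x y z"
      unfolding collinear_equilibrium_shape_def by blast
    then show ?thesis
      using labels(1) by blast
  next
    case xz: False
    have "G x y *\<^sub>R (p y - p x) + G y z *\<^sub>R (p y - p z) = 0"
      using balance_pair[of y x z] labels G_sym[of y x] by (auto simp: insert_commute)
    then have Gxz: "G x z = - (u * G x y)" and Gyz: "G y z * (1 - u) = u * G x y"
      using segment_force_balance[OF y xz] balance_pair[OF labels] by auto
    consider "u = 0" | "u = 1" | "0 < u" "u < 1"
      using u by linarith
    then show ?thesis
    proof cases
      case 1
      then have "p x = p y" "G z x = 0" "G z y = 0"
        using y Gxz Gyz G_sym[of z x] G_sym[of z y] by simp_all
      moreover have "G x y < 0"
        using compressed in_T ne calculation by simp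
      ultimately have "collinear_equilibrium_shape G p z x y"
        unfolding collinear_equilibrium_shape_def using xz by blast
      moreover have "{z, x, y} = {a, b, c}"
        using labels(1) by blast
      ultimately show ?thesis
        by blast
    next
      case 2
      then have "p y = p z" "G x y = 0" "G x z = 0"
        using y Gxz Gyz by simp_all
      moreover have "G y z < 0"
        using compressed in_T ne calculation by simp
      ultimately have "collinear_equilibrium_shape G p x y z"
        unfolding collinear_equilibrium_shape_def using xz by auto
      then show ?thesis
        using labels(1) by blast
    next
      case 3
      then show ?thesis
        using interior_shape[OF labels _ _ y xz Gxz Gyz] labels(1) by blast
    qed
  qed
qed

lemma collinear_shape:
  assumes "collinear {p a, p b, p c}"
  shows "\<exists>i j k. {i, j, k} = {a, b, c} \<and> collinear_equilibrium_shape G p i j k"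
proof -
  have "between (p b, p c) (p a) \<or> between (p c, p a) (p b) \<or> between (p a, p b) (p c)"
    using assms collinear_between_cases by blast
  then show ?thesis
  proof (elim disjE)
    assume "between (p b, p c) (p a)"
    then show ?thesis
      using segment_shape[of b a c] distinct_labels
      by (auto simp: between_mem_segment insert_commute)
  next
    assume "between (p c, p a) (p b)"
    then show ?thesis
      using segment_shape[of a b c] distinct_labels
      by (simp add: between_mem_segment closed_segment_commute)
  next
    assume "between (p a, p b) (p c)"
    then show ?thesis
      using segment_shape[of a c b] distinct_labels
      by (auto simp: between_mem_segment insert_commute)
  qed
qed

end

lemma admissible_potential_gradient_sign:
  assumes pot: "admissible_potential \<phi> g" and d: "d > 0" and x: "x \<ge> -(d^2)"
  shows "g x d < 0 \<longleftrightarrow> x < 0" "g x d > 0 \<longleftrightarrow> x > 0"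
proof -
  have mono: "strict_mono_on {-(d^2)..} (\<lambda>x. g x d)"
    and zero: "\<forall>x>-(d^2). g x d = 0 \<longleftrightarrow> x = 0"
    using pot d unfolding admissible_potential_def by blast+
  have "-(d^2) < 0"
    using d by simp
  then have g0: "g 0 d = 0"
    using zero by auto
  have less: "g y d < g z d" if "-(d^2) \<le> y" "y < z" for y z
    using strict_mono_onD[OF mono, of y z] that by auto
  have "x < 0 \<Longrightarrow> g x d < 0" "x > 0 \<Longrightarrow> g x d > 0"
    using less[of x 0] less[of 0 x] x \<open>-(d^2) < 0\<close> g0 by simp_all
  then show "g x d < 0 \<longleftrightarrow> x < 0" "g x d > 0 \<longleftrightarrow> x > 0"
    using g0 by (cases x "0::real" rule: linorder_cases; simp)+
qed

lemma
  assumes "admissible_potential \<phi> g" "dbar i j > 0"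
  shows gij_less_0_iff: "gij g p dbar i j < 0 \<longleftrightarrow> norm (p i - p j) < dbar i j"
    and gij_greater_0_iff: "gij g p dbar i j > 0 \<longleftrightarrow> norm (p i - p j) > dbar i j"
proof -
  have "err p dbar i j \<ge> -((dbar i j)^2)"
    unfolding err_def by simp
  note sign = admissible_potential_gradient_sign[OF assms this]
  have "norm (p i - p j) ^ 2 < dbar i j ^ 2 \<longleftrightarrow> norm (p i - p j) < dbar i j"
    "dbar i j ^ 2 < norm (p i - p j) ^ 2 \<longleftrightarrow> dbar i j < norm (p i - p j)"
    using assms(2) by (auto intro: power_strict_mono power_less_imp_less_base)
  then show "gij g p dbar i j < 0 \<longleftrightarrow> norm (p i - p j) < dbar i j"
    "gij g p dbar i j > 0 \<longleftrightarrow> norm (p i - p j) > dbar i j"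
    unfolding gij_def sign unfolding err_def by simp_all
qed

lemma gij_sym:
  assumes "\<And>i j. dbar i j = dbar j i"
  shows "gij g p dbar i j = gij g p dbar j i"
  unfolding gij_def err_def using assms by (simp add: norm_minus_commute)

lemma equilibrium_E4_triangle_balance:
  assumes eq: "equilibrium g E4 dbar p" and dsym: "\<And>i j. dbar i j = dbar j i"
    and x: "x \<in> {1, 2, 3}"
  shows "(\<Sum>y\<in>{1, 2, 3} - {x}. gij g p dbar x y *\<^sub>R (p x - p y)) = 0"
proof -
  let ?F = "\<lambda>i j. gij g p dbar i j *\<^sub>R (p i - p j)"
  have balance: "(\<Sum>j\<in>nbrs E4 i. ?F i j) = 0" for i
    using eq unfolding equilibrium_def by blast
  have "nbrs E4 4 = {3}" "nbrs E4 3 = {1, 2, 4}"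
    by (auto simp: nbrs_def E4_def)
  then have F43: "?F 4 3 = 0" and F3: "?F 3 1 + ?F 3 2 + ?F 3 4 = 0"
    using balance[of 4] balance[of 3] by (simp_all add: add.assoc)
  have "?F 3 4 = - ?F 4 3"
    by (simp add: gij_sym[OF dsym, where i=3 and j=4] algebra_simps)
  then have "?F 3 4 = 0"
    unfolding F43 by simp
  then have "?F 3 1 + ?F 3 2 = 0"
    using F3 by (simp only: add_0_right)
  then have "(\<Sum>y\<in>{1, 2}. ?F 3 y) = 0"
    by simp
  moreover have "nbrs E4 1 = {1, 2, 3} - {1}" "nbrs E4 2 = {1, 2, 3} - {2}"
    and "{1, 2} = {1, 2, 3} - {3 :: nat}"
    by (auto simp: nbrs_def E4_def)
  ultimately show ?thesis
    using x balance[of 1] balance[of 2] by (elim insertE emptyE) metis+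
qed

lemma strict_triangle_inequalities_permute:
  fixes d :: "'a \<Rightarrow> 'a \<Rightarrow> real"
  assumes dsym: "\<And>i j. d i j = d j i"
    and "d a c < d a b + d b c" "d a b < d b c + d a c" "d b c < d a c + d a b"
    and "{x, y, z} = {a, b, c}" "distinct [x, y, z]"
  shows "d x z < d x y + d y z"
proof -
  have "x \<in> {a, b, c}" "y \<in> {a, b, c}" "z \<in> {a, b, c}"
    using assms(5) by blast+
  then show ?thesis
    using assms(2-4,6) dsym[of b a] dsym[of c a] dsym[of c b] by auto
qed

theorem lemma2:
  fixes \<phi> g :: "real \<Rightarrow> real \<Rightarrow> real"
    and dbar :: "nat \<Rightarrow> nat \<Rightarrow> real"
    and p :: config
  assumes pot: "admissible_potential \<phi> g"
    and dsym: "\<And>i j. dbar i j = dbar j i"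
    and dpos: "\<forall>(i, j)\<in>E4. dbar i j > 0"
    and feas: "dbar 1 2 + dbar 2 3 > dbar 1 3" "dbar 2 3 + dbar 1 3 > dbar 1 2"
              "dbar 1 3 + dbar 1 2 > dbar 2 3"
    and QI: "undesired_eq g E4 dbar p"
    and col: "collinear {p 1, p 2, p 3}"
  shows "\<exists>i j k. {i, j, k} = {1, 2, 3::nat} \<and>
     ((p i \<noteq> p j \<and> p j \<noteq> p k \<and> p i \<noteq> p k \<and> p j \<in> open_segment (p i) (p k) \<and>
         gij g p dbar i j < 0 \<and> gij g p dbar j k < 0 \<and> gij g p dbar i k > 0 \<and>
         gij g p dbar i j + gij g p dbar i k < 0 \<and> gij g p dbar j k + gij g p dbar i k < 0)
    \<or> (p j = p k \<and> p j \<noteq> p i \<and>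
         gij g p dbar j k < 0 \<and> gij g p dbar i j = 0 \<and> gij g p dbar i k = 0)
    \<or> (p i = p j \<and> p j = p k \<and>
         gij g p dbar i j < 0 \<and> gij g p dbar j k < 0 \<and> gij g p dbar i k < 0))"
proof -
  have d_pos: "dbar x y > 0" if "x \<in> {1, 2, 3}" "y \<in> {1, 2, 3}" "x \<noteq> y" for x y
    using that dpos dsym[of x y] by (auto simp: E4_def)
  interpret triangle_equilibrium "gij g p dbar" dbar p 1 2 3
  proof
    show "distinct [1, 2, 3 :: nat]"
      by simp
    show "gij g p dbar x y = gij g p dbar y x" for x y
      using gij_sym[OF dsym] .
    show "gij g p dbar x y < 0 \<longleftrightarrow> norm (p x - p y) < dbar x y"
      "gij g p dbar x y > 0 \<longleftrightarrow> norm (p x - p y) > dbar x y"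
      "dbar x y > 0"
      if "x \<in> {1, 2, 3}" "y \<in> {1, 2, 3}" "x \<noteq> y" for x y
      using d_pos[OF that] gij_less_0_iff[OF pot] gij_greater_0_iff[OF pot] by auto
    show "dbar x z < dbar x y + dbar y z" if "{x, y, z} = {1, 2, 3}" "distinct [x, y, z]" for x y z
      using strict_triangle_inequalities_permute[OF dsym feas that] .
    show "(\<Sum>y\<in>{1, 2, 3} - {x}. gij g p dbar x y *\<^sub>R (p x - p y)) = 0" if "x \<in> {1, 2, 3}" for x
      using equilibrium_E4_triangle_balance QI dsym that unfolding undesired_eq_def by blast
  qed
  show ?thesis
    using collinear_shape col unfolding collinear_equilibrium_shape_def by blast
qed

end
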